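(* Let $I$ be a set of integers, let $n$ be a positive integer, and let $(a(i_0,\dots,i_n))_{i_0,\dots,i_n\in I}$ be a family of integers. Then there exists a family of integers $(x(i_0,\dots,i_{n-1}))_{i_0,\dots,i_{n-1}\in I}$ such that $$\sum_{j=0}^{n}(-1)^j\,x(i_0,\dots,\widehat{i_j},\dots,i_n)\equiv a(i_0,\dots,i_n)\pmod{(i_0,\dots,i_n)}\quad\text{for all } i_0,\dots,i_n\in I$$ if and only if $$\sum_{j=0}^{n+1}(-1)^j\,a(i_0,\dots,\widehat{i_j},\dots,i_{n+1})\equiv 0\pmod{(i_0,\dots,i_{n+1})}\quad\text{for all } i_0,\dots,i_{n+1}\in I.$$
   Context: For integers $i_0,\dots,i_m$, the notation $(i_0,\dots,i_m)$ denotes the ideal of $\mathbb{Z}$ generated by $i_0,\dots,i_m$, i.e. $\gcd(i_0,\dots,i_m)\mathbb{Z}$; a congruence modulo an ideal means the difference lies in that ideal. A hat $\widehat{i_j}$ means that the entry $i_j$ is omitted. *)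

theory Defs
  imports Main "HOL-Number_Theory.Cong"
begin

text \<open>Tuples (i_0,...,i_m) are represented as lists of length m+1.
  omit j xs removes the entry at position j (the hat notation).
  The ideal (i_0,...,i_m) is generated by Gcd of the entries.\<close>

definition omit :: "nat \<Rightarrow> 'a list \<Rightarrow> 'a list" where
  "omit j xs = take j xs @ drop (Suc j) xs"

definition ideal_gen :: "int list \<Rightarrow> int" where
  "ideal_gen xs = Gcd (set xs)"

end

theory Submission
  imports Defs "HOL-Analysis.Analysis"
begin

(* Necessity: the coboundary of a coboundary vanishes, and the modulus of a face of a tuple
   is a multiple of the modulus of the tuple.
   Sufficiency: by the cocycle condition at k # sigma, the cone x tau = a (k # tau) solves the
   congruence at sigma modulo gcd k (ideal_gen sigma). Over a finite nonempty set F of indices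
   these cones are averaged with integer weights of sum 1 such that Lcm F divides every w k * k
   (Bezout for the coprime numbers Lcm F div k); this solves every congruence whose modulus
   divides Lcm F. If 0 is an index, Lcm {0} = 0 and this already solves everything. Otherwise
   the moduli of n-tuples are positive, solutions may be reduced to residues, and compactness
   of the product of the finite sets {0..<ideal_gen tau} yields a simultaneous solution of all
   congruences. *)

lemma length_omit: "j < length xs \<Longrightarrow> length (omit j xs) = length xs - 1"
  by (simp add: omit_def)

lemma set_omit_subset: "set (omit j xs) \<subseteq> set xs"
  by (auto simp: omit_def dest: in_set_takeD in_set_dropD)

lemma omit_Cons_0 [simp]: "omit 0 (x # xs) = xs"
  by (simp add: omit_def)

lemma omit_Cons_Suc [simp]: "omit (Suc j) (x # xs) = x # omit j xs"
  by (simp add: omit_def)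

lemma omit_omit:
  assumes "j \<le> l" "Suc l < length xs"
  shows "omit l (omit j xs) = omit j (omit (Suc l) xs)"
proof -
  have "take (l - j) (drop (Suc j) xs) = drop (Suc j) (take (Suc l) xs)"
    using assms by (simp add: take_drop)
  then show ?thesis
    using assms by (simp add: omit_def take_append drop_append)
qed

definition coboundary :: "('a list \<Rightarrow> 'b::comm_ring_1) \<Rightarrow> 'a list \<Rightarrow> 'b" where
  "coboundary f xs = (\<Sum>j<length xs. (-1) ^ j * f (omit j xs))"

lemma coboundary_atLeast0AtMost:
  "length xs = Suc m \<Longrightarrow> (\<Sum>j = 0..m. (-1) ^ j * f (omit j xs)) = coboundary f xs"
  by (simp add: coboundary_def atLeast0AtMost lessThan_Suc_atMost)

lemma coboundary_Cons: "coboundary f (x # xs) = f xs - coboundary (\<lambda>ys. f (x # ys)) xs"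
  unfolding coboundary_def length_Cons sum.lessThan_Suc_shift by (simp add: sum_negf)

lemma coboundary_coboundary [simp]: "coboundary (coboundary f) xs = 0"
proof -
  define N where "N = length xs"
  define g where "g = (\<lambda>(j, l). (-1) ^ (j + l) * f (omit l (omit j xs)))"
  define A where "A = {(j, l) \<in> {..<N} \<times> {..<N - 1}. j \<le> l}"
  define B where "B = {(j, l) \<in> {..<N} \<times> {..<N - 1}. l < j}"
  have "coboundary (coboundary f) xs = (\<Sum>j<N. \<Sum>l<N - 1. g (j, l))"
    unfolding coboundary_def N_def
    by (intro sum.cong) (simp_all add: g_def length_omit sum_distrib_left power_add mult_ac)
  also have "\<dots> = sum g (A \<union> B)"
    unfolding sum.cartesian_product by (intro sum.cong) (auto simp: A_def B_def)
  also have "\<dots> = sum g A + sum g B"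
    by (rule sum.union_disjoint) (auto simp: A_def B_def intro: finite_subset[of _ "{..<N} \<times> {..<N - 1}"])
  also have "sum g B = sum (\<lambda>(j, l). g (Suc l, j)) A"
    by (rule sum.reindex_bij_witness[where i = "\<lambda>(j, l). (Suc l, j)" and j = "\<lambda>(j, l). (l, j - 1)"])
      (auto simp: A_def B_def)
  also have "\<dots> = - sum g A"
    unfolding sum_negf[symmetric]
  proof (intro sum.cong)
    fix p assume "p \<in> A"
    then obtain j l where "p = (j, l)" "j \<le> l" "Suc l < length xs"
      by (auto simp: A_def N_def)
    then show "(\<lambda>(j, l). g (Suc l, j)) p = - g p"
      by (simp add: g_def omit_omit add.commute)
  qed simp
  finally show ?thesis by simp
qed

lemma cong_coboundary:
  fixes f g :: "'a list \<Rightarrow> int"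
  assumes "\<And>j. j < length xs \<Longrightarrow> [f (omit j xs) = g (omit j xs)] (mod m)"
  shows "[coboundary f xs = coboundary g xs] (mod m)"
  unfolding coboundary_def by (intro cong_sum cong_scalar_left) (simp add: assms)

lemma ideal_gen_Cons [simp]: "ideal_gen (k # xs) = gcd k (ideal_gen xs)"
  by (simp add: ideal_gen_def)

lemma ideal_gen_dvd_omit: "ideal_gen xs dvd ideal_gen (omit j xs)"
  unfolding ideal_gen_def by (meson Gcd_dvd Gcd_greatest set_omit_subset subsetD)

lemma ideal_gen_dvd_Lcm: "xs \<noteq> [] \<Longrightarrow> set xs \<subseteq> F \<Longrightarrow> ideal_gen xs dvd Lcm F"
  unfolding ideal_gen_def by (meson Gcd_dvd dvd_Lcm dvd_trans last_in_set subsetD)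

definition cocycle_mod :: "int set \<Rightarrow> nat \<Rightarrow> (int list \<Rightarrow> int) \<Rightarrow> bool" where
  "cocycle_mod I n a \<longleftrightarrow>
     (\<forall>\<sigma> \<in> lists I. length \<sigma> = n + 2 \<longrightarrow> [coboundary a \<sigma> = 0] (mod ideal_gen \<sigma>))"

definition primitive_mod :: "int set \<Rightarrow> nat \<Rightarrow> (int list \<Rightarrow> int) \<Rightarrow> (int list \<Rightarrow> int) \<Rightarrow> bool" where
  "primitive_mod I n x a \<longleftrightarrow>
     (\<forall>\<sigma> \<in> lists I. length \<sigma> = n + 1 \<longrightarrow> [coboundary x \<sigma> = a \<sigma>] (mod ideal_gen \<sigma>))"

lemma primitive_mod_imp_cocycle_mod:
  assumes "primitive_mod I n x a"
  shows "cocycle_mod I n a"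
  unfolding cocycle_mod_def
proof (intro ballI impI)
  fix \<sigma> assume \<sigma>: "\<sigma> \<in> lists I" "length \<sigma> = n + 2"
  have "[coboundary a \<sigma> = coboundary (coboundary x) \<sigma>] (mod ideal_gen \<sigma>)"
  proof (rule cong_coboundary)
    fix j assume "j < length \<sigma>"
    then have "omit j \<sigma> \<in> lists I" "length (omit j \<sigma>) = n + 1"
      using \<sigma> set_omit_subset[of j \<sigma>] by (auto simp: length_omit)
    then have "[coboundary x (omit j \<sigma>) = a (omit j \<sigma>)] (mod ideal_gen (omit j \<sigma>))"
      using assms by (simp add: primitive_mod_def)
    then show "[a (omit j \<sigma>) = coboundary x (omit j \<sigma>)] (mod ideal_gen \<sigma>)"
      by (meson cong_sym cong_dvd_modulus ideal_gen_dvd_omit)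
  qed
  then show "[coboundary a \<sigma> = 0] (mod ideal_gen \<sigma>)"
    by simp
qed

lemma Gcd_image_linear_combination:
  fixes f :: "'a \<Rightarrow> int"
  assumes "finite A"
  shows "\<exists>c. (\<Sum>k\<in>A. c k * f k) = Gcd (f ` A)"
  using assms
proof (induction A rule: finite_induct)
  case empty
  show ?case by simp
next
  case (insert a A)
  then obtain c where c: "(\<Sum>k\<in>A. c k * f k) = Gcd (f ` A)"
    by blast
  obtain u v where uv: "u * f a + v * Gcd (f ` A) = gcd (f a) (Gcd (f ` A))"
    using bezout_int by blast
  define c' where "c' k = (if k = a then u else v * c k)" for k
  have "(\<Sum>k\<in>A. c' k * f k) = v * (\<Sum>k\<in>A. c k * f k)"
    unfolding sum_distrib_left by (rule sum.cong) (use insert in \<open>auto simp: c'_def\<close>)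
  then have "(\<Sum>k\<in>insert a A. c' k * f k) = Gcd (f ` insert a A)"
    using insert uv c by (simp add: c'_def)
  then show ?case by blast
qed

lemma Gcd_Lcm_div_eq_1:
  fixes F :: "int set"
  assumes "finite F" "0 \<notin> F" "F \<noteq> {}"
  shows "Gcd ((\<lambda>k. Lcm F div k) ` F) = 1"
proof -
  define L where "L = Lcm F"
  define G where "G = Gcd ((\<lambda>k. L div k) ` F)"
  obtain k0 where "k0 \<in> F"
    using assms(3) by blast
  have "L \<noteq> 0"
    using assms by (simp add: L_def Lcm_0_iff)
  have L_eq: "L = k * (L div k)" if "k \<in> F" for k
    using that by (simp add: L_def dvd_Lcm)
  have G_dvd: "G dvd L div k" if "k \<in> F" for k
    using that by (simp add: G_def)
  have "G \<noteq> 0"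
    using G_dvd[OF \<open>k0 \<in> F\<close>] L_eq[OF \<open>k0 \<in> F\<close>] \<open>L \<noteq> 0\<close> by auto
  have "G dvd L"
    using G_dvd[OF \<open>k0 \<in> F\<close>] L_eq[OF \<open>k0 \<in> F\<close>] by (metis dvd_mult)
  have "k dvd L div G" if "k \<in> F" for k
  proof -
    have "G * k dvd L"
      using G_dvd[OF that] L_eq[OF that] by (metis mult.commute mult_dvd_mono dvd_refl)
    then show ?thesis
      using \<open>G \<noteq> 0\<close> \<open>G dvd L\<close> by (metis dvd_div_iff_mult mult.commute)
  qed
  then have "L dvd L div G"
    unfolding L_def by (simp add: Lcm_least)
  moreover have "L div G \<noteq> 0"
    using \<open>G dvd L\<close> \<open>L \<noteq> 0\<close> by (simp add: dvd_div_eq_0_iff)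
  ultimately have "G * (L div G) dvd 1 * (L div G)"
    using \<open>G dvd L\<close> by simp
  then have "G dvd 1"
    using \<open>L div G \<noteq> 0\<close> by (simp only: dvd_mult_cancel_right) simp
  then show ?thesis
    by (simp add: G_def L_def)
qed

lemma Lcm_partition_of_unity:
  fixes F :: "int set"
  assumes "finite F" "F \<noteq> {}"
  obtains w where "(\<Sum>k\<in>F. w k) = 1" "\<And>k. k \<in> F \<Longrightarrow> Lcm F dvd w k * k"
proof (cases "0 \<in> F")
  case True
  define w :: "int \<Rightarrow> int" where "w k = (if k = 0 then 1 else 0)" for k
  have "(\<Sum>k\<in>F. w k) = 1"
    using True assms(1) by (simp add: w_def)
  moreover have "Lcm F dvd w k * k" for k
    by (simp add: w_def)
  ultimately show ?thesis
    using that by blast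
next
  case False
  obtain c where c: "(\<Sum>k\<in>F. c k * (Lcm F div k)) = 1"
    using Gcd_image_linear_combination[OF assms(1), of "\<lambda>k. Lcm F div k"]
      Gcd_Lcm_div_eq_1[OF assms(1) False assms(2)] by auto
  have "Lcm F dvd c k * (Lcm F div k) * k" if "k \<in> F" for k
  proof -
    have "Lcm F div k * k = Lcm F"
      using that by (simp add: dvd_Lcm)
    then show ?thesis
      by (metis dvd_triv_right mult.assoc)
  qed
  then show ?thesis
    using that c by blast
qed

lemma cong_coboundary_cone:
  fixes a :: "'a list \<Rightarrow> int"
  assumes "finite F" "(\<Sum>k\<in>F. w k) = 1"
    and "\<And>k. k \<in> F \<Longrightarrow> m dvd w k * coboundary a (k # \<sigma>)"
  shows "[coboundary (\<lambda>\<tau>. \<Sum>k\<in>F. w k * a (k # \<tau>)) \<sigma> = a \<sigma>] (mod m)"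
proof -
  have "coboundary (\<lambda>\<tau>. \<Sum>k\<in>F. w k * a (k # \<tau>)) \<sigma> =
      (\<Sum>k\<in>F. w k * coboundary (\<lambda>\<tau>. a (k # \<tau>)) \<sigma>)"
    unfolding coboundary_def sum_distrib_left by (subst sum.swap) (simp add: mult_ac)
  also have "\<dots> = (\<Sum>k\<in>F. w k) * a \<sigma> - (\<Sum>k\<in>F. w k * coboundary a (k # \<sigma>))"
    by (simp add: coboundary_Cons right_diff_distrib sum_subtractf sum_distrib_right)
  finally show ?thesis
    using assms(2,3) by (simp add: cong_iff_dvd_diff dvd_sum)
qed

lemma cocycle_mod_imp_primitive_mod_dvd_Lcm:
  assumes "cocycle_mod I n a" "finite F" "F \<noteq> {}" "F \<subseteq> I"
  obtains x where "\<And>\<sigma>. \<sigma> \<in> lists I \<Longrightarrow> length \<sigma> = n + 1 \<Longrightarrow> ideal_gen \<sigma> dvd Lcm F \<Longrightarrow>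
    [coboundary x \<sigma> = a \<sigma>] (mod ideal_gen \<sigma>)"
proof -
  obtain w where w_sum: "(\<Sum>k\<in>F. w k) = 1" and w_dvd: "\<And>k. k \<in> F \<Longrightarrow> Lcm F dvd w k * k"
    using Lcm_partition_of_unity assms(2,3) by blast
  have "[coboundary (\<lambda>\<tau>. \<Sum>k\<in>F. w k * a (k # \<tau>)) \<sigma> = a \<sigma>] (mod ideal_gen \<sigma>)"
    if \<sigma>: "\<sigma> \<in> lists I" "length \<sigma> = n + 1" "ideal_gen \<sigma> dvd Lcm F" for \<sigma>
  proof (rule cong_coboundary_cone[OF assms(2) w_sum])
    fix k assume "k \<in> F"
    let ?g = "ideal_gen \<sigma>"
    have "[coboundary a (k # \<sigma>) = 0] (mod ideal_gen (k # \<sigma>))"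
      using assms(4) \<open>k \<in> F\<close> \<sigma> by (intro assms(1)[unfolded cocycle_mod_def, rule_format]) auto
    then have "gcd k ?g dvd coboundary a (k # \<sigma>)"
      by (simp add: cong_0_iff)
    moreover have "?g dvd w k * gcd k ?g"
    proof -
      have "?g dvd gcd (w k * k) (w k * ?g)"
        using dvd_trans[OF \<sigma>(3) w_dvd[OF \<open>k \<in> F\<close>]] by simp
      then show ?thesis
        by (simp add: gcd_mult_left)
    qed
    ultimately show "?g dvd w k * coboundary a (k # \<sigma>)"
      by (meson dvd_trans mult_dvd_mono dvd_refl)
  qed
  then show ?thesis
    using that by blast
qed

lemma closedin_product_discrete_topology_finite_dependence:
  assumes "finite T" "T \<subseteq> K"
    and "\<And>x y. (\<And>t. t \<in> T \<Longrightarrow> x t = y t) \<Longrightarrow> P x \<longleftrightarrow> P y"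
  shows "closedin (product_topology (\<lambda>k. discrete_topology (S k)) K) {x \<in> Pi\<^sub>E K S. P x}"
proof -
  let ?X = "product_topology (\<lambda>k. discrete_topology (S k)) K"
  define cylinder where "cylinder z = Pi\<^sub>E K (\<lambda>k. if k \<in> T then {z k} else S k)" for z
  have cylinder_open: "openin ?X (cylinder z)" if "z \<in> Pi\<^sub>E K S" for z
    unfolding cylinder_def
  proof (rule product_topology_basis)
    show "openin (discrete_topology (S k)) (if k \<in> T then {z k} else S k)" for k
      using that assms(2) by (auto simp: PiE_iff)
    show "finite {k. (if k \<in> T then {z k} else S k) \<noteq> topspace (discrete_topology (S k))}"
      by (rule finite_subset[OF _ assms(1)]) auto
  qed
  have "openin ?X (Pi\<^sub>E K S - {x \<in> Pi\<^sub>E K S. P x})"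
  proof (subst openin_subopen, intro ballI exI conjI)
    fix z assume z: "z \<in> Pi\<^sub>E K S - {x \<in> Pi\<^sub>E K S. P x}"
    then show "openin ?X (cylinder z)"
      by (intro cylinder_open) simp
    show "z \<in> cylinder z"
      using z by (auto simp: cylinder_def PiE_iff)
    show "cylinder z \<subseteq> Pi\<^sub>E K S - {x \<in> Pi\<^sub>E K S. P x}"
    proof
      fix y assume y: "y \<in> cylinder z"
      then have "y \<in> Pi\<^sub>E K S"
        using z by (auto simp: cylinder_def PiE_iff split: if_splits)
      moreover have "P y \<longleftrightarrow> P z"
      proof (rule assms(3))
        show "y t = z t" if "t \<in> T" for t
          using y that assms(2) unfolding cylinder_def PiE_iff by (metis singletonD subsetD)
      qed
      ultimately show "y \<in> Pi\<^sub>E K S - {x \<in> Pi\<^sub>E K S. P x}"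
        using z by simp
    qed
  qed
  then show ?thesis
    by (simp add: closedin_def)
qed

lemma finitely_satisfiable_imp_satisfiable_PiE:
  assumes "\<And>k. k \<in> K \<Longrightarrow> finite (S k)"
    and "\<And>l. l \<in> L \<Longrightarrow> finite (T l)" "\<And>l. l \<in> L \<Longrightarrow> T l \<subseteq> K"
    and "\<And>l x y. l \<in> L \<Longrightarrow> (\<And>t. t \<in> T l \<Longrightarrow> x t = y t) \<Longrightarrow> P l x \<longleftrightarrow> P l y"
    and "\<And>M. finite M \<Longrightarrow> M \<subseteq> L \<Longrightarrow> \<exists>x \<in> Pi\<^sub>E K S. \<forall>l \<in> M. P l x"
  shows "\<exists>x \<in> Pi\<^sub>E K S. \<forall>l \<in> L. P l x"
proof (cases "L = {}")
  case True
  then show ?thesis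
    using assms(5)[of "{}"] by simp
next
  case False
  let ?X = "product_topology (\<lambda>k. discrete_topology (S k)) K"
  define C where "C l = {x \<in> Pi\<^sub>E K S. P l x}" for l
  have "compact_space ?X"
    using assms(1) by (simp add: compact_space_product_topology compact_space_discrete_topology)
  moreover have "closedin ?X (C l)" if "l \<in> L" for l
    unfolding C_def
    by (rule closedin_product_discrete_topology_finite_dependence[OF assms(2,3)[OF that] assms(4)[OF that]])
  moreover have "\<Inter>\<F> \<noteq> {}" if \<F>: "finite \<F>" "\<F> \<subseteq> C ` L" for \<F>
  proof -
    obtain M where "M \<subseteq> L" "finite M" "\<F> = C ` M"
      using finite_subset_image[OF \<F>] by blast
    then show ?thesis
      using assms(5)[of M] unfolding C_def by blast
  qed
  ultimately have "\<Inter>(C ` L) \<noteq> {}"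
    unfolding compact_space_fip by blast
  then show ?thesis
    using False unfolding C_def by blast
qed

lemma cong_coboundary_restrict_mod:
  assumes "\<And>j. j < length \<sigma> \<Longrightarrow> omit j \<sigma> \<in> K"
  shows "[coboundary (restrict (\<lambda>\<tau>. x \<tau> mod ideal_gen \<tau>) K) \<sigma> = coboundary x \<sigma>] (mod ideal_gen \<sigma>)"
proof (rule cong_coboundary)
  fix j assume "j < length \<sigma>"
  then have "[restrict (\<lambda>\<tau>. x \<tau> mod ideal_gen \<tau>) K (omit j \<sigma>) = x (omit j \<sigma>)] (mod ideal_gen (omit j \<sigma>))"
    using assms by simp
  then show "[restrict (\<lambda>\<tau>. x \<tau> mod ideal_gen \<tau>) K (omit j \<sigma>) = x (omit j \<sigma>)] (mod ideal_gen \<sigma>)"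
    using cong_dvd_modulus ideal_gen_dvd_omit by blast
qed

lemma cocycle_mod_imp_finitely_many_residue_solutions:
  assumes "cocycle_mod I n a" "0 \<notin> I" "n > 0"
    and "finite M" "M \<subseteq> {\<sigma> \<in> lists I. length \<sigma> = n + 1}"
  shows "\<exists>x \<in> (\<Pi>\<^sub>E \<tau> \<in> {\<tau> \<in> lists I. length \<tau> = n}. {0..<ideal_gen \<tau>}).
    \<forall>\<sigma> \<in> M. [coboundary x \<sigma> = a \<sigma>] (mod ideal_gen \<sigma>)"
proof -
  define K where "K = {\<tau> \<in> lists I. length \<tau> = n}"
  have ideal_gen_pos: "ideal_gen \<tau> > 0" if "\<tau> \<in> K" for \<tau>
    using that assms(2,3) by (cases \<tau>) (auto simp: K_def ideal_gen_def le_less)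
  show ?thesis
  proof (cases "M = {}")
    case True
    have "restrict (\<lambda>_. 0) K \<in> (\<Pi>\<^sub>E \<tau> \<in> K. {0..<ideal_gen \<tau>})"
      using ideal_gen_pos by auto
    then show ?thesis
      using True unfolding K_def by blast
  next
    case False
    define F where "F = \<Union>(set ` M)"
    have "finite F" "F \<subseteq> I"
      using assms(4,5) by (auto simp: F_def)
    moreover have "F \<noteq> {}"
      using False assms(5) by (fastforce simp: F_def)
    ultimately obtain x where x: "\<And>\<sigma>. \<sigma> \<in> lists I \<Longrightarrow> length \<sigma> = n + 1 \<Longrightarrow>
        ideal_gen \<sigma> dvd Lcm F \<Longrightarrow> [coboundary x \<sigma> = a \<sigma>] (mod ideal_gen \<sigma>)"
      using cocycle_mod_imp_primitive_mod_dvd_Lcm[OF assms(1)] by blast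
    define y where "y = restrict (\<lambda>\<tau>. x \<tau> mod ideal_gen \<tau>) K"
    have "y \<in> (\<Pi>\<^sub>E \<tau> \<in> K. {0..<ideal_gen \<tau>})"
      using ideal_gen_pos by (auto simp: y_def)
    moreover have "[coboundary y \<sigma> = a \<sigma>] (mod ideal_gen \<sigma>)" if "\<sigma> \<in> M" for \<sigma>
    proof -
      have \<sigma>: "\<sigma> \<in> lists I" "length \<sigma> = n + 1"
        using that assms(5) by auto
      have "[coboundary y \<sigma> = coboundary x \<sigma>] (mod ideal_gen \<sigma>)"
        unfolding y_def using \<sigma> set_omit_subset
        by (intro cong_coboundary_restrict_mod) (fastforce simp: K_def length_omit)
      also have "[coboundary x \<sigma> = a \<sigma>] (mod ideal_gen \<sigma>)"
        by (rule x[OF \<sigma> ideal_gen_dvd_Lcm]) (use that \<sigma>(2) in \<open>auto simp: F_def\<close>)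
      finally show ?thesis .
    qed
    ultimately show ?thesis
      unfolding K_def by blast
  qed
qed

lemma cocycle_mod_imp_primitive_mod:
  assumes "cocycle_mod I n a" "n > 0"
  obtains x where "primitive_mod I n x a"
proof (cases "0 \<in> I")
  case True
  obtain x where "\<And>\<sigma>. \<sigma> \<in> lists I \<Longrightarrow> length \<sigma> = n + 1 \<Longrightarrow> ideal_gen \<sigma> dvd Lcm {0} \<Longrightarrow>
      [coboundary x \<sigma> = a \<sigma>] (mod ideal_gen \<sigma>)"
    using cocycle_mod_imp_primitive_mod_dvd_Lcm[OF assms(1), of "{0}"] True by blast
  then have "primitive_mod I n x a"
    by (simp add: primitive_mod_def)
  then show ?thesis
    by (rule that)
next
  case False
  let ?K = "{\<tau> \<in> lists I. length \<tau> = n}" and ?L = "{\<sigma> \<in> lists I. length \<sigma> = n + 1}"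
  have "\<exists>x \<in> (\<Pi>\<^sub>E \<tau> \<in> ?K. {0..<ideal_gen \<tau>}). \<forall>\<sigma> \<in> ?L. [coboundary x \<sigma> = a \<sigma>] (mod ideal_gen \<sigma>)"
  proof (rule finitely_satisfiable_imp_satisfiable_PiE[where T = "\<lambda>\<sigma>. (\<lambda>j. omit j \<sigma>) ` {..<length \<sigma>}"])
    show "(\<lambda>j. omit j \<sigma>) ` {..<length \<sigma>} \<subseteq> ?K" if "\<sigma> \<in> ?L" for \<sigma>
      using that set_omit_subset by (fastforce simp: length_omit)
    show "[coboundary x \<sigma> = a \<sigma>] (mod ideal_gen \<sigma>) \<longleftrightarrow> [coboundary y \<sigma> = a \<sigma>] (mod ideal_gen \<sigma>)"
      if "\<And>t. t \<in> (\<lambda>j. omit j \<sigma>) ` {..<length \<sigma>} \<Longrightarrow> x t = y t" for \<sigma> x y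
    proof -
      have "coboundary x \<sigma> = coboundary y \<sigma>"
        unfolding coboundary_def using that by (intro sum.cong) auto
      then show ?thesis
        by simp
    qed
    show "\<exists>x \<in> (\<Pi>\<^sub>E \<tau> \<in> ?K. {0..<ideal_gen \<tau>}). \<forall>\<sigma> \<in> M. [coboundary x \<sigma> = a \<sigma>] (mod ideal_gen \<sigma>)"
      if "finite M" "M \<subseteq> ?L" for M
      using cocycle_mod_imp_finitely_many_residue_solutions[OF assms(1) False assms(2) that] .
  qed auto
  then obtain x where "\<forall>\<sigma> \<in> ?L. [coboundary x \<sigma> = a \<sigma>] (mod ideal_gen \<sigma>)"
    by blast
  then have "primitive_mod I n x a"
    by (simp add: primitive_mod_def)
  then show ?thesis
    by (rule that)
qed

lemma ex_primitive_mod_iff_cocycle_mod: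
  assumes "n > 0"
  shows "(\<exists>x. primitive_mod I n x a) \<longleftrightarrow> cocycle_mod I n a"
  using primitive_mod_imp_cocycle_mod cocycle_mod_imp_primitive_mod[OF _ assms] by blast

theorem theorem2:
  fixes I :: "int set" and n :: nat and a :: "int list \<Rightarrow> int"
  assumes "n > 0"
  shows "(\<exists>x :: int list \<Rightarrow> int. \<forall>is \<in> lists I. length is = n + 1 \<longrightarrow>
            [(\<Sum>j = 0..n. (-1) ^ j * x (omit j is)) = a is] (mod ideal_gen is))
     \<longleftrightarrow> (\<forall>is \<in> lists I. length is = n + 2 \<longrightarrow>
            [(\<Sum>j = 0..n+1. (-1) ^ j * a (omit j is)) = 0] (mod ideal_gen is))"
  using ex_primitive_mod_iff_cocycle_mod[OF assms, of I a]
  \<comment> \<open>without deleting \<open>sum.cl_ivl_Suc\<close>, the last summand over \<open>{0..n+1}\<close> is split off first\<close>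
  by (simp add: primitive_mod_def cocycle_mod_def coboundary_atLeast0AtMost del: sum.cl_ivl_Suc)

end
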